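(* Let $\mathsf P\subset\mathbb R^m$ be a $(\mu,\epsilon)$-net, $0<\rho_0\le\mu/4$, and $\mathsf P'$ a $\rho_0\epsilon$-perturbation of $\mathsf P$; set $\epsilon'=(1+\rho_0)\epsilon$ and $\mu'=(\mu-2\rho_0)/(1+\rho_0)$. Let $0<\Gamma_0\le1$ and $\delta_0\ge0$ satisfy $$\delta_0\le\Gamma_0^{m+1}\quad\text{and}\quad\Gamma_0\le\frac{2\mu^2}{75}.$$ If $\tau\subseteq\mathsf P'$ is a forbidden configuration (with parameters $\mu',\epsilon',\delta_0,\Gamma_0$), then $\tau$ has the $\alpha_0$-hoop property with $\alpha_0=2(16/\mu)^3\Gamma_0$, and $R(\tau_p)<2\epsilon$ for every $p\in\tau$.
   Context: Let $d(x,X)$ denote Euclidean distance from a point to a set; $B(c,r)$ is the open ball. For a finite $\mathsf P\subset\mathbb R^m$ and $\epsilon>0$, $\mathsf P$ is $\epsilon$-dense if $d(x,\mathsf P\cup\partial\,\mathrm{conv}(\mathsf P))<\epsilon$ for every $x\in\mathrm{conv}(\mathsf P)$; it is $\mu\epsilon$-separated if $\|p-q\|\ge\mu\epsilon$ for all distinct $p,q\in\mathsf P$. For $0<\mu\le1$, $\mathsf P$ is a $(\mu,\epsilon)$-net if it is $\epsilon$-dense and $\mu\epsilon$-separated. A $\rho_0\epsilon$-perturbation of $\mathsf P$ is a bijection $\zeta:\mathsf P\to\mathsf P'\subset\mathbb R^m$ with $\|\zeta(p)-p\|\le\rho_0\epsilon$ for all $p$. A simplex is a nonempty finite subset $\sigma\subset\mathbb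 R^m$ (vertices need not be affinely independent); $\dim\sigma=|\sigma|-1$; faces are nonempty subsets. For $p\in\sigma$, $\sigma_p=\sigma\setminus\{p\}$. $L(\sigma)$ is the largest distance between vertices. Altitude $D(p,\sigma)=d(p,\mathrm{aff}(\sigma_p))$. Thickness of a $j$-simplex: $\Upsilon(\sigma)=1$ if $j=0$, else $\min_{p}D(p,\sigma)/(jL(\sigma))$. $\sigma$ is $\Gamma_0$-good if every $j$-face $\sigma^j$ satisfies $\Upsilon(\sigma^j)\ge\Gamma_0^j$; $\Gamma_0$-bad otherwise; a $\Gamma_0$-flake is a $\Gamma_0$-bad simplex whose proper faces are all $\Gamma_0$-good. A circumscribing ball of $\sigma$ is an open ball whose boundary contains all vertices of $\sigma$. If one exists, the circumcentre $c(\sigma)$ and circumradius $R(\sigma)$ are the centre and radius of the smallest one (write $R(\sigma)<\infty$); otherwise $R(\sigma)=\infty$. The circumsphere is $S(\sigma)=\partial B(c(\sigma),R(\sigma))\cap\mathrm{aff}(\sigma)$. Forbidden configuration: given finite $\mathsf P'\subset\mathbb R^m$ and parameters $\mu',\epsilon'>0$, $0<\Gamma_0\le1$, $\delta_0\ge0$, a $(k+1)$-simplex $\tau\subseteq\mathsf P'$ with $k\le m$ is a forbidden configuration if it is a $\Gamma_0$-flake and there exist $p\in\tau$ and a circumscribing ball $B(C,R)$ of $\tau_p$ with $R<\epsilon'$ and $\big|\,\|p-C\|-R\,\big|\le\delta_0\mu'\epsilon'$. A simplex $\tau$ has the $\alpha_0$-hoop property ($\alpha_0>0$) if for every $p\in\tau$,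 $R(\tau_p)<\infty$ and $d(p,S(\tau_p))\le\alpha_0R(\tau_p)$. *)

theory Defs
  imports "HOL-Analysis.Analysis"
begin

text \<open>Points live in an abstract Euclidean space 'a with m = DIM('a).\<close>

definition eps_dense :: "real \<Rightarrow> 'a::euclidean_space set \<Rightarrow> bool" where
  "eps_dense \<epsilon> P \<longleftrightarrow>
     (\<forall>x \<in> convex hull P. infdist x (P \<union> frontier (convex hull P)) < \<epsilon>)"

definition separated :: "real \<Rightarrow> 'a::euclidean_space set \<Rightarrow> bool" where
  "separated s P \<longleftrightarrow> (\<forall>p\<in>P. \<forall>q\<in>P. p \<noteq> q \<longrightarrow> s \<le> dist p q)"

definition is_net :: "real \<Rightarrow> real \<Rightarrow> 'a::euclidean_space set \<Rightarrow> bool" where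
  "is_net \<mu> \<epsilon> P \<longleftrightarrow> finite P \<and> 0 < \<epsilon> \<and> 0 < \<mu> \<and> \<mu> \<le> 1 \<and>
     eps_dense \<epsilon> P \<and> separated (\<mu> * \<epsilon>) P"

definition is_perturbation ::
  "real \<Rightarrow> 'a::euclidean_space set \<Rightarrow> ('a \<Rightarrow> 'a) \<Rightarrow> 'a set \<Rightarrow> bool" where
  "is_perturbation r P \<zeta> P' \<longleftrightarrow> bij_betw \<zeta> P P' \<and> (\<forall>p\<in>P. norm (\<zeta> p - p) \<le> r)"

definition longest_edge :: "'a::euclidean_space set \<Rightarrow> real" where
  "longest_edge \<sigma> = Max {dist p q | p q. p \<in> \<sigma> \<and> q \<in> \<sigma>}"

definition altitude :: "'a::euclidean_space \<Rightarrow> 'a set \<Rightarrow> real" where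
  "altitude p \<sigma> = infdist p (affine hull (\<sigma> - {p}))"

definition thickness :: "'a::euclidean_space set \<Rightarrow> real" where
  "thickness \<sigma> = (if card \<sigma> = 1 then 1
     else Min ((\<lambda>p. altitude p \<sigma>) ` \<sigma>) / (real (card \<sigma> - 1) * longest_edge \<sigma>))"

definition is_simplex :: "'a set \<Rightarrow> bool" where
  "is_simplex \<sigma> \<longleftrightarrow> finite \<sigma> \<and> \<sigma> \<noteq> {}"

definition good :: "real \<Rightarrow> 'a::euclidean_space set \<Rightarrow> bool" where
  "good \<Gamma> \<sigma> \<longleftrightarrow> (\<forall>\<tau>. \<tau> \<subseteq> \<sigma> \<and> \<tau> \<noteq> {} \<longrightarrow> \<Gamma> ^ (card \<tau> - 1) \<le> thickness \<tau>)"

definition flake :: "real \<Rightarrow> 'a::euclidean_space set \<Rightarrow> bool" where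
  "flake \<Gamma> \<sigma> \<longleftrightarrow> is_simplex \<sigma> \<and> \<not> good \<Gamma> \<sigma> \<and>
     (\<forall>\<tau>. \<tau> \<subset> \<sigma> \<and> \<tau> \<noteq> {} \<longrightarrow> good \<Gamma> \<tau>)"

definition circ_ball :: "'a::euclidean_space set \<Rightarrow> 'a \<Rightarrow> real \<Rightarrow> bool" where
  "circ_ball \<sigma> c r \<longleftrightarrow> 0 < r \<and> \<sigma> \<subseteq> frontier (ball c r)"

text \<open>R(sigma) < infinity: some circumscribing ball exists.\<close>
definition circ_finite :: "'a::euclidean_space set \<Rightarrow> bool" where
  "circ_finite \<sigma> \<longleftrightarrow> (\<exists>c r. circ_ball \<sigma> c r)"

definition smallest_circ_ball :: "'a::euclidean_space set \<Rightarrow> 'a \<Rightarrow> real \<Rightarrow> bool" where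
  "smallest_circ_ball \<sigma> c r \<longleftrightarrow> circ_ball \<sigma> c r \<and> (\<forall>c' r'. circ_ball \<sigma> c' r' \<longrightarrow> r \<le> r')"

definition circumcentre :: "'a::euclidean_space set \<Rightarrow> 'a" where
  "circumcentre \<sigma> = fst (SOME cr. smallest_circ_ball \<sigma> (fst cr) (snd cr))"

definition circumradius :: "'a::euclidean_space set \<Rightarrow> real" where
  "circumradius \<sigma> = snd (SOME cr. smallest_circ_ball \<sigma> (fst cr) (snd cr))"

definition circumsphere :: "'a::euclidean_space set \<Rightarrow> 'a set" where
  "circumsphere \<sigma> = sphere (circumcentre \<sigma>) (circumradius \<sigma>) \<inter> affine hull \<sigma>"

definition forbidden_config ::
  "'a::euclidean_space set \<Rightarrow> real \<Rightarrow> real \<Rightarrow> real \<Rightarrow> real \<Rightarrow> 'a set \<Rightarrow> bool" where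
  "forbidden_config P' \<mu>' \<epsilon>' \<Gamma> \<delta> \<tau> \<longleftrightarrow>
     \<tau> \<subseteq> P' \<and> (\<exists>k::nat. k \<le> DIM('a) \<and> card \<tau> = k + 2) \<and> flake \<Gamma> \<tau> \<and>
     (\<exists>p\<in>\<tau>. \<exists>C R. circ_ball (\<tau> - {p}) C R \<and> R < \<epsilon>' \<and>
        \<bar>norm (p - C) - R\<bar> \<le> \<delta> * \<mu>' * \<epsilon>')"

definition hoop_property :: "real \<Rightarrow> 'a::euclidean_space set \<Rightarrow> bool" where
  "hoop_property \<alpha> \<tau> \<longleftrightarrow> (\<forall>p\<in>\<tau>. circ_finite (\<tau> - {p}) \<and>
     infdist p (circumsphere (\<tau> - {p})) \<le> \<alpha> * circumradius (\<tau> - {p}))"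

end

(*
  All data are first rescaled to the perturbed net: the vertices of \<tau> are M-separated with
  M = \<mu>'\<epsilon>' \<ge> \<mu>\<epsilon>/2, the vertices other than p lie on a sphere of radius R < 5\<epsilon>/4 about C, and p
  lies within \<eta> = \<delta>0 M of that sphere.  Since every facet of the flake \<tau> is \<Gamma>-good, all facet
  altitudes are at least \<Gamma>^k k M, while \<tau> itself has an altitude smaller by a factor of order \<Gamma>.
  Comparing barycentric weights transfers this small altitude to every vertex, so all altitudes
  of \<tau> are O(\<Gamma>\<epsilon>/\<mu>).  For each vertex q, pushing C along the normal of the facet opposite p
  gives a circumscribing ball of \<tau>_q of radius < 2\<epsilon>, and the foot of the altitude from q has
  small power with respect to the circumsphere of \<tau>_q, which places q close to that sphere.
*)

theory Submission
  imports Defs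
begin

lemma closest_point_affine_hull:
  fixes S :: "'a::euclidean_space set" and x :: 'a
  assumes "S \<noteq> {}"
  defines "x' \<equiv> closest_point (affine hull S) x"
  shows closest_point_affine_hull_mem: "x' \<in> affine hull S"
    and dist_closest_point_affine_hull: "dist x x' = infdist x (affine hull S)"
    and closest_point_affine_hull_orthogonal:
      "y \<in> affine hull S \<Longrightarrow> inner (x - x') (y - x') = 0"
proof -
  have cl: "closed (affine hull S)" and ne: "affine hull S \<noteq> {}"
    using assms(1) by auto
  show mem: "x' \<in> affine hull S"
    unfolding x'_def using closest_point_in_set[OF cl ne] .
  show "dist x x' = infdist x (affine hull S)"
    unfolding x'_def using ne by (simp add: infdist_eq_setdist setdist_closest_point)
  assume y: "y \<in> affine hull S"
  \<comment> \<open>The reflection of y in x' also lies in the affine hull, so both dot products are \<le> 0.\<close>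
  have y': "x' + (-1) *\<^sub>R (y - x') \<in> affine hull S"
    using mem_affine_3_minus[OF affine_affine_hull mem y mem] .
  have "inner (x - x') (y - x') \<le> 0"
    unfolding x'_def using closest_point_dot[OF convex_affine_hull cl y] .
  moreover have "inner (x - x') ((x' + (-1) *\<^sub>R (y - x')) - x') \<le> 0"
    unfolding x'_def using closest_point_dot[OF convex_affine_hull cl y'[unfolded x'_def]] .
  ultimately show "inner (x - x') (y - x') = 0"
    by (simp add: inner_diff_right)
qed

lemma affine_shifted_sum_mem:
  fixes S :: "'a::real_vector set"
  assumes "affine S" "a \<in> S" "finite B" "B \<subseteq> S"
  shows "a + (\<Sum>v\<in>B. c v *\<^sub>R (v - a)) \<in> S"
  using assms(3,4)
proof (induction B rule: finite_induct)
  case empty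
  then show ?case using assms by simp
next
  case (insert b B)
  then have "(a + (\<Sum>v\<in>B. c v *\<^sub>R (v - a))) + c b *\<^sub>R (b - a) \<in> S"
    using mem_affine_3_minus[OF assms(1) _ _ assms(2)] by auto
  then show ?case using insert by (simp add: algebra_simps)
qed

lemma sum_scaleR_diff_right:
  fixes a :: "'a::real_vector"
  shows "(\<Sum>v\<in>B. u v *\<^sub>R (v - a)) = (\<Sum>v\<in>B. u v *\<^sub>R v) - sum u B *\<^sub>R a"
  by (simp add: scaleR_diff_right sum_subtractf scaleR_sum_left)

lemma circ_ball_iff: "circ_ball \<sigma> c r \<longleftrightarrow> 0 < r \<and> (\<forall>v\<in>\<sigma>. dist c v = r)"
  by (auto simp: circ_ball_def)

lemma smallest_circ_ball_circumcentre:
  fixes S :: "'a::euclidean_space set"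
  assumes "circ_finite S" "v0 \<in> S" "v1 \<in> S" "v0 \<noteq> v1"
  shows "smallest_circ_ball S (circumcentre S) (circumradius S)"
proof -
  \<comment> \<open>The centres of circumscribing balls form a closed set K; the smallest ball is centred
    at the point of K closest to a vertex.\<close>
  define K where "K = {c. \<forall>v\<in>S. dist c v = dist c v0}"
  have "closed K"
  proof -
    have "K = (\<Inter>v\<in>S. {c. dist c v - dist c v0 = 0})" unfolding K_def by auto
    then show ?thesis
      by (simp add: closed_INT closed_Collect_eq continuous_on_diff continuous_on_dist)
  qed
  have centre_in_K: "c \<in> K" if "circ_ball S c r" for c r
    using that assms(2) by (auto simp: circ_ball_iff K_def)
  obtain c r where "circ_ball S c r" using assms(1) unfolding circ_finite_def by blast
  then have "K \<noteq> {}" using centre_in_K by blast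
  define c0 where "c0 = closest_point K v0"
  have c0: "c0 \<in> K" unfolding c0_def using closest_point_in_set[OF \<open>closed K\<close> \<open>K \<noteq> {}\<close>] .
  have "dist c0 v1 = dist c0 v0" using c0 assms(3) unfolding K_def by blast
  then have "0 < dist c0 v0" using assms(4) by (metis zero_less_dist_iff)
  then have ball0: "circ_ball S c0 (dist c0 v0)"
    using c0 unfolding K_def circ_ball_iff by auto
  have "smallest_circ_ball S c0 (dist c0 v0)"
    unfolding smallest_circ_ball_def
  proof (intro conjI ball0 allI impI)
    fix c' r' assume b: "circ_ball S c' r'"
    have "dist v0 c0 \<le> dist v0 c'"
      using closest_point_le[OF \<open>closed K\<close> centre_in_K[OF b]] unfolding c0_def .
    moreover have "dist c' v0 = r'" using b assms(2) by (simp add: circ_ball_iff)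
    ultimately show "dist c0 v0 \<le> r'" by (simp add: dist_commute)
  qed
  then have "\<exists>cr. smallest_circ_ball S (fst cr) (snd cr)" by (intro exI[of _ "(c0, _)"]) simp
  from someI_ex[OF this] show ?thesis unfolding circumcentre_def circumradius_def .
qed

lemma dist_sq_orthogonal:
  fixes a b y :: "'a::real_inner"
  assumes "inner (a - b) (y - b) = 0"
  shows "(dist a y)\<^sup>2 = (dist a b)\<^sup>2 + (dist b y)\<^sup>2"
proof -
  have "a - y = (a - b) - (y - b)" by simp
  then have "(norm (a - y))\<^sup>2 = (norm (a - b))\<^sup>2 + (norm (y - b))\<^sup>2"
    using assms by (simp add: power2_norm_eq_inner inner_diff_left inner_diff_right inner_commute)
  then show ?thesis by (simp add: dist_norm norm_minus_commute)
qed

lemma smallest_circ_ball_centre_in_affine_hull: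
  fixes S :: "'a::euclidean_space set"
  assumes sm: "smallest_circ_ball S c r" and v: "v0 \<in> S" "v1 \<in> S" "v0 \<noteq> v1"
  shows "c \<in> affine hull S"
proof (rule ccontr)
  assume c: "c \<notin> affine hull S"
  \<comment> \<open>Otherwise projecting the centre onto the affine hull gives a smaller circumscribing ball.\<close>
  have "S \<noteq> {}" using v by auto
  define c' where "c' = closest_point (affine hull S) c"
  have c': "c' \<in> affine hull S"
    unfolding c'_def using closest_point_affine_hull_mem[OF \<open>S \<noteq> {}\<close>] .
  have cb: "circ_ball S c r" using sm unfolding smallest_circ_ball_def by blast
  define r' where "r' = sqrt (r\<^sup>2 - (dist c c')\<^sup>2)"
  have r'v: "dist c' v = r'" if "v \<in> S" for v
  proof -
    have "(dist c v)\<^sup>2 = (dist c c')\<^sup>2 + (dist c' v)\<^sup>2"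
      using dist_sq_orthogonal closest_point_affine_hull_orthogonal[OF \<open>S \<noteq> {}\<close> hull_inc[OF that]]
      unfolding c'_def by blast
    then show ?thesis using cb that by (simp add: circ_ball_iff r'_def real_sqrt_unique)
  qed
  have "0 < r'"
    using r'v[OF v(1)] r'v[OF v(2)] v(3) by (metis dist_eq_0_iff zero_le_dist order_neq_le_trans)
  then have "r \<le> r'" using sm r'v unfolding smallest_circ_ball_def circ_ball_iff by blast
  moreover have "r' < r"
  proof -
    have "0 < dist c c'" using c c' by auto
    then have "r' < sqrt (r\<^sup>2)" unfolding r'_def by (intro real_sqrt_less_mono) simp
    then show ?thesis using cb by (simp add: circ_ball_iff)
  qed
  ultimately show False by simp
qed

lemma finite_edge_lengths:
  assumes "finite \<sigma>"
  shows "finite {dist p q | p q. p \<in> \<sigma> \<and> q \<in> \<sigma>}"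
proof -
  have "{dist p q | p q. p \<in> \<sigma> \<and> q \<in> \<sigma>} = (\<lambda>(p, q). dist p q) ` (\<sigma> \<times> \<sigma>)" by auto
  then show ?thesis using assms by simp
qed

lemma dist_le_longest_edge:
  assumes "finite \<sigma>" "p \<in> \<sigma>" "q \<in> \<sigma>"
  shows "dist p q \<le> longest_edge \<sigma>"
  unfolding longest_edge_def using assms finite_edge_lengths by (intro Max_ge) auto

lemma longest_edge_attained:
  assumes "finite \<sigma>" "\<sigma> \<noteq> {}"
  obtains p q where "p \<in> \<sigma>" "q \<in> \<sigma>" "longest_edge \<sigma> = dist p q"
proof -
  have "longest_edge \<sigma> \<in> {dist p q | p q. p \<in> \<sigma> \<and> q \<in> \<sigma>}"
    unfolding longest_edge_def using assms finite_edge_lengths by (intro Max_in) auto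
  then show ?thesis using that by auto
qed

lemma altitude_le_dist:
  assumes "w \<in> \<sigma>" "w \<noteq> v"
  shows "altitude v \<sigma> \<le> dist v w"
  unfolding altitude_def using assms by (intro infdist_le hull_inc) auto

lemma infdist_empty [simp]: "infdist x {} = 0"
  unfolding infdist_def by simp

lemma altitude_nonneg: "0 \<le> altitude v \<sigma>"
  unfolding altitude_def by (rule infdist_nonneg)

lemma affine_weight_mul_altitude_le:
  fixes \<sigma> :: "'a::euclidean_space set"
  assumes fin: "finite \<sigma>" and p: "p \<in> \<sigma>" and u: "sum u \<sigma> = 1"
  shows "\<bar>u p\<bar> * altitude p \<sigma> \<le> dist (\<Sum>v\<in>\<sigma>. u v *\<^sub>R v) p + altitude p \<sigma>"
proof (cases "\<sigma> - {p} = {}")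
  case True
  then show ?thesis unfolding altitude_def True by simp
next
  case False
  define A where "A = affine hull (\<sigma> - {p})"
  define a where "a = closest_point A p"
  have a: "a \<in> A" and pa: "dist p a = altitude p \<sigma>"
    and orth: "\<And>y. y \<in> A \<Longrightarrow> inner (p - a) (y - a) = 0"
    using closest_point_affine_hull[OF False] unfolding a_def A_def altitude_def by auto
  define y where "y = (\<Sum>v\<in>\<sigma>. u v *\<^sub>R v)"
  define z where "z = a + (\<Sum>v\<in>\<sigma> - {p}. u v *\<^sub>R (v - a))"
  have "z \<in> A" unfolding z_def A_def
    using affine_shifted_sum_mem[OF affine_affine_hull a[unfolded A_def] _ hull_subset] fin by simp
  then have z_orth: "inner (z - a) (p - a) = 0" using orth by (metis inner_commute)
  have sum_u: "sum u (\<sigma> - {p}) = 1 - u p" and y: "y = u p *\<^sub>R p + (\<Sum>v\<in>\<sigma> - {p}. u v *\<^sub>R v)"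
    using u sum.remove[OF fin p, of u] sum.remove[OF fin p, of "\<lambda>v. u v *\<^sub>R v"] unfolding y_def
    by auto
  have "y - z = u p *\<^sub>R (p - a)"
    unfolding z_def sum_scaleR_diff_right sum_u y by (simp add: algebra_simps)
  then have "y - a = (z - a) + u p *\<^sub>R (p - a)" by (simp add: algebra_simps)
  then have "inner (y - a) (p - a) = inner (z - a) (p - a) + u p * inner (p - a) (p - a)"
    by (simp only: inner_add_left inner_scaleR_left)
  then have "inner (y - a) (p - a) = u p * (norm (p - a))\<^sup>2"
    using z_orth by (simp add: power2_norm_eq_inner)
  then have "\<bar>u p\<bar> * (norm (p - a))\<^sup>2 \<le> norm (y - a) * norm (p - a)"
    using Cauchy_Schwarz_ineq2[of "y - a" "p - a"] by (simp add: abs_mult)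
  then have "\<bar>u p\<bar> * norm (p - a) \<le> norm (y - a)"
    by (cases "norm (p - a) = 0") (auto simp: power2_eq_square mult.assoc[symmetric])
  also have "\<dots> \<le> dist y p + dist p a" using dist_triangle[of y a p] by (simp add: dist_norm)
  finally show ?thesis using pa unfolding y_def by (simp add: dist_norm)
qed

lemma altitude_transfer:
  fixes \<tau> :: "'a::euclidean_space set"
  assumes fin: "finite \<tau>" and q0: "q0 \<in> \<tau>" and q: "q \<in> \<tau>" "q \<noteq> q0"
  shows "altitude q \<tau> * (altitude q0 (\<tau> - {q}) - altitude q0 \<tau>)
    \<le> altitude q0 \<tau> * longest_edge \<tau>"
proof (cases "altitude q0 (\<tau> - {q}) \<le> altitude q0 \<tau>")
  case True
  have "altitude q \<tau> * (altitude q0 (\<tau> - {q}) - altitude q0 \<tau>) \<le> 0"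
    using True altitude_nonneg by (intro mult_nonneg_nonpos) auto
  moreover have "0 \<le> altitude q0 \<tau> * longest_edge \<tau>"
    using altitude_nonneg[of q0 \<tau>] dist_le_longest_edge[OF fin q0 q0] by simp
  ultimately show ?thesis by linarith
next
  case False
  define D0 where "D0 = altitude q0 \<tau>"
  define G where "G = altitude q0 (\<tau> - {q})"
  define B where "B = \<tau> - {q0} - {q}"
  have "\<tau> - {q} - {q0} = B" unfolding B_def by blast
  then have G: "G = infdist q0 (affine hull B)" unfolding G_def altitude_def by simp
  have "D0 < G" using False D0_def G_def by simp
  then have "B \<noteq> {}" using altitude_nonneg[of q0 \<tau>] unfolding D0_def G by auto
  then obtain v1 where v1: "v1 \<in> B" by blast
  have "\<tau> - {q0} \<noteq> {}" using q by auto
  define x where "x = closest_point (affine hull (\<tau> - {q0})) q0"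
  have "x \<in> affine hull (\<tau> - {q0})" and q0x: "dist q0 x = D0"
    using closest_point_affine_hull[OF \<open>\<tau> - {q0} \<noteq> {}\<close>]
    unfolding x_def D0_def altitude_def by auto
  then obtain u where u: "sum u (\<tau> - {q0}) = 1" "(\<Sum>v\<in>\<tau> - {q0}. u v *\<^sub>R v) = x"
    using fin by (auto simp: affine_hull_finite)
  have qB: "q \<in> \<tau> - {q0}" "finite (\<tau> - {q0})" "finite B" using q fin B_def by auto
  have sum_B: "sum u B = 1 - u q" and x: "x = u q *\<^sub>R q + (\<Sum>v\<in>B. u v *\<^sub>R v)"
    using u sum.remove[OF qB(2,1), of u] sum.remove[OF qB(2,1), of "\<lambda>v. u v *\<^sub>R v"]
    unfolding B_def by auto
  \<comment> \<open>Moving the weight of q onto v1 gives a point of aff B close to x, so that weight is large.\<close>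
  define z where "z = v1 + (\<Sum>v\<in>B. u v *\<^sub>R (v - v1))"
  have "z \<in> affine hull B"
    unfolding z_def by (rule affine_shifted_sum_mem[OF affine_affine_hull hull_inc[OF v1] qB(3) hull_subset])
  have "x - z = u q *\<^sub>R (q - v1)"
    unfolding z_def sum_scaleR_diff_right sum_B x by (simp add: algebra_simps)
  then have "dist x z = \<bar>u q\<bar> * dist q v1" by (simp add: dist_norm)
  also have "\<dots> \<le> \<bar>u q\<bar> * longest_edge \<tau>"
    using dist_le_longest_edge[OF fin q(1), of v1] v1 B_def by (intro mult_left_mono) auto
  finally have "dist x z \<le> \<bar>u q\<bar> * longest_edge \<tau>" .
  moreover have "G \<le> dist q0 z" unfolding G using \<open>z \<in> affine hull B\<close> by (rule infdist_le)
  ultimately have gap: "G - D0 \<le> \<bar>u q\<bar> * longest_edge \<tau>"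
    using dist_triangle[of q0 z x] q0x by linarith
  then have "u q \<noteq> 0" using \<open>D0 < G\<close> by auto
  \<comment> \<open>Conversely, solving x = \<Sum> u v v for q exhibits a point of aff (\<tau> - {q}) at distance D0 / |u q| from q.\<close>
  define y where "y = q0 + (\<Sum>v\<in>B. (- u v / u q) *\<^sub>R (v - q0))"
  have "q0 \<in> affine hull (\<tau> - {q})" using q0 q by (intro hull_inc) auto
  moreover have "B \<subseteq> affine hull (\<tau> - {q})" using hull_subset[of "\<tau> - {q}" affine] B_def by blast
  ultimately have "y \<in> affine hull (\<tau> - {q})"
    unfolding y_def by (rule affine_shifted_sum_mem[OF affine_affine_hull _ qB(3)])
  then have alt_q: "altitude q \<tau> \<le> dist q y" unfolding altitude_def by (rule infdist_le)
  have "u q *\<^sub>R (\<Sum>v\<in>B. (- u v / u q) *\<^sub>R (v - q0)) = - (\<Sum>v\<in>B. u v *\<^sub>R (v - q0))"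
    using \<open>u q \<noteq> 0\<close> by (simp add: scaleR_sum_right sum_negf[symmetric])
  then have "u q *\<^sub>R (q - y) = x - q0"
    unfolding y_def sum_scaleR_diff_right x sum_B by (simp add: algebra_simps)
  then have "norm (u q *\<^sub>R (q - y)) = dist x q0" by (simp add: dist_norm)
  then have uq_y: "\<bar>u q\<bar> * dist q y = D0" using q0x by (simp add: dist_norm norm_minus_commute)
  have "altitude q \<tau> * (G - D0) \<le> dist q y * (G - D0)"
    using alt_q \<open>D0 < G\<close> by (intro mult_right_mono) auto
  also have "\<dots> \<le> dist q y * (\<bar>u q\<bar> * longest_edge \<tau>)"
    using gap by (intro mult_left_mono) auto
  also have "\<dots> = D0 * longest_edge \<tau>" using uq_y by (simp add: algebra_simps)
  finally have "altitude q \<tau> * (G - D0) \<le> D0 * longest_edge \<tau>" .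
  then show ?thesis unfolding D0_def G_def .
qed

lemma circ_ball_extend:
  fixes \<sigma> :: "'a::euclidean_space set"
  assumes p: "p \<in> \<sigma>" and C: "\<And>v. v \<in> \<sigma> - {p} \<Longrightarrow> dist C v = R"
    and W: "0 < altitude p \<sigma>"
  obtains c r where "circ_ball \<sigma> c r" "r \<le> R + \<bar>(dist C p)\<^sup>2 - R\<^sup>2\<bar> / (2 * altitude p \<sigma>)"
proof -
  define W where "W = altitude p \<sigma>"
  have "\<sigma> - {p} \<noteq> {}"
  proof
    assume "\<sigma> - {p} = {}"
    then have "altitude p \<sigma> = 0" unfolding altitude_def by (simp only: affine_hull_empty infdist_empty)
    then show False using W by simp
  qed
  then obtain v0 where v0: "v0 \<in> \<sigma> - {p}" by blast
  define a where "a = closest_point (affine hull (\<sigma> - {p})) p"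
  define w where "w = p - a"
  have nw: "norm w = W"
    using dist_closest_point_affine_hull[OF \<open>\<sigma> - {p} \<noteq> {}\<close>]
    unfolding w_def a_def W_def altitude_def by (simp add: dist_norm)
  have orth: "inner w (v - a) = 0" if "v \<in> \<sigma> - {p}" for v
    using closest_point_affine_hull_orthogonal[OF \<open>\<sigma> - {p} \<noteq> {}\<close> hull_inc[OF that]]
    unfolding w_def a_def .
  \<comment> \<open>Move C along the normal w of aff (\<sigma> - {p}): the powers of the points of \<sigma> - {p} change
    by the same amount, and t is chosen to make the power of p change by the same amount too.\<close>
  define t where "t = ((dist C p)\<^sup>2 - R\<^sup>2) / (2 * W\<^sup>2)"
  define c where "c = C + t *\<^sub>R w"
  define K where "K = R\<^sup>2 + 2 * t * inner (C - a) w + t\<^sup>2 * W\<^sup>2"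
  have dist_c: "(dist c v)\<^sup>2 = (dist C v)\<^sup>2 + 2 * t * inner (C - v) w + t\<^sup>2 * W\<^sup>2" for v
  proof -
    have "c - v = (C - v) + t *\<^sub>R w" unfolding c_def by simp
    then have "(dist c v)\<^sup>2 = (norm ((C - v) + t *\<^sub>R w))\<^sup>2" by (metis dist_norm)
    also have "\<dots> = (norm (C - v))\<^sup>2 + 2 * t * inner (C - v) w + t\<^sup>2 * (norm w)\<^sup>2"
      by (simp only: power2_norm_eq_inner)
        (simp add: inner_commute power2_eq_square algebra_simps)
    finally show ?thesis using nw by (simp add: dist_norm)
  qed
  have on_facet: "(dist c v)\<^sup>2 = K" if "v \<in> \<sigma> - {p}" for v
  proof -
    have "inner (C - v) w = inner (C - a) w"
      using orth[OF that] by (simp add: inner_diff_left inner_diff_right inner_commute)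
    then show ?thesis using dist_c[of v] C[OF that] unfolding K_def by simp
  qed
  have on_p: "(dist c p)\<^sup>2 = K"
  proof -
    have "inner (C - p) w = inner (C - a) w - W\<^sup>2"
      using nw power2_norm_eq_inner[of w]
      by (simp add: w_def inner_diff_left inner_diff_right inner_commute)
    moreover have "2 * t * W\<^sup>2 = (dist C p)\<^sup>2 - R\<^sup>2" unfolding t_def using W W_def by simp
    ultimately show ?thesis
      using dist_c[of p] unfolding K_def by (simp add: right_diff_distrib)
  qed
  have all: "dist c v = dist c v0" if "v \<in> \<sigma>" for v
  proof -
    have "(dist c v)\<^sup>2 = (dist c v0)\<^sup>2"
      using on_facet[OF v0] on_p on_facet[of v] that by (cases "v = p") auto
    then show ?thesis by simp
  qed
  have "0 < dist c v0"
    using all[OF p] v0 by (metis DiffE insertI1 zero_less_dist_iff)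
  then have "circ_ball \<sigma> c (dist c v0)" using all by (simp add: circ_ball_iff)
  moreover have "dist c v0 \<le> R + \<bar>t\<bar> * W"
  proof -
    have "dist c v0 \<le> dist C v0 + dist C c" by (metis dist_triangle dist_commute)
    also have "dist C c = \<bar>t\<bar> * W" unfolding c_def using nw by (simp add: dist_norm)
    finally show ?thesis using C[OF v0] by simp
  qed
  moreover have "\<bar>t\<bar> * W = \<bar>(dist C p)\<^sup>2 - R\<^sup>2\<bar> / (2 * W)"
    unfolding t_def using W W_def by (simp add: power2_eq_square field_simps)
  ultimately show ?thesis using that W_def by simp
qed

lemma infdist_sphere_inter_affine_le:
  fixes c y v :: "'a::euclidean_space"
  assumes r: "0 < r" and H: "affine H" "c \<in> H" "y \<in> H" "v \<in> H" and v: "dist c v = r"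
  shows "infdist y (sphere c r \<inter> H) \<le> \<bar>(dist y c)\<^sup>2 - r\<^sup>2\<bar> / r"
proof (cases "y = c")
  case True
  have "infdist y (sphere c r \<inter> H) \<le> dist y v" using H v by (intro infdist_le) simp
  then show ?thesis using True v r by (simp add: power2_eq_square)
next
  case False
  \<comment> \<open>Compare with the radial projection s of y onto the sphere.\<close>
  define n where "n = dist y c"
  have n: "0 < n" using False n_def by simp
  define s where "s = c + (r / n) *\<^sub>R (y - c)"
  have "s \<in> H" unfolding s_def using mem_affine_3_minus[OF H(1,2,3,2)] by simp
  moreover have "dist c s = r" unfolding s_def n_def using r n n_def by (simp add: dist_norm)
  ultimately have "infdist y (sphere c r \<inter> H) \<le> dist y s" by (intro infdist_le) simp
  also have "dist y s = \<bar>n - r\<bar>"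
  proof -
    have "y - s = (1 - r / n) *\<^sub>R (y - c)" unfolding s_def by (simp add: algebra_simps)
    then have "dist y s = \<bar>(1 - r / n) * n\<bar>" using n by (simp add: dist_norm n_def abs_mult)
    also have "(1 - r / n) * n = n - r" using n by (simp add: field_simps)
    finally show ?thesis .
  qed
  also have "\<bar>n - r\<bar> = \<bar>n\<^sup>2 - r\<^sup>2\<bar> / (n + r)"
    using n r by (simp add: power2_eq_square square_diff_square_factored abs_mult)
  also have "\<dots> \<le> \<bar>n\<^sup>2 - r\<^sup>2\<bar> / r" using n r by (intro divide_left_mono) auto
  finally show ?thesis unfolding n_def .
qed

lemma power_difference_affine_combination:
  fixes \<sigma> :: "'a::euclidean_space set"
  assumes "finite \<sigma>" "sum u \<sigma> = 1"
  shows "(dist (\<Sum>v\<in>\<sigma>. u v *\<^sub>R v) c)\<^sup>2 - r\<^sup>2 - ((dist (\<Sum>v\<in>\<sigma>. u v *\<^sub>R v) C)\<^sup>2 - R\<^sup>2)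
    = (\<Sum>v\<in>\<sigma>. u v * ((dist v c)\<^sup>2 - r\<^sup>2 - ((dist v C)\<^sup>2 - R\<^sup>2)))"
proof -
  \<comment> \<open>The difference of the power functions of two spheres is an affine function.\<close>
  have affine_fn: "(dist x c)\<^sup>2 - r\<^sup>2 - ((dist x C)\<^sup>2 - R\<^sup>2)
      = inner x (2 *\<^sub>R (C - c)) + (inner c c - inner C C - r\<^sup>2 + R\<^sup>2)" for x :: 'a
    by (simp add: dist_norm power2_norm_eq_inner inner_commute algebra_simps)
  have "(\<Sum>v\<in>\<sigma>. u v * (inner v d + e)) = (\<Sum>v\<in>\<sigma>. u v * inner v d) + (\<Sum>v\<in>\<sigma>. u v) * e"
    for d e by (simp add: distrib_left sum.distrib sum_distrib_right)
  also have "\<dots> d e = inner (\<Sum>v\<in>\<sigma>. u v *\<^sub>R v) d + e" for d e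
    using assms by (simp add: inner_sum_left)
  finally have "(\<Sum>v\<in>\<sigma>. u v * (inner v d + e)) = inner (\<Sum>v\<in>\<sigma>. u v *\<^sub>R v) d + e" for d e .
  then show ?thesis unfolding affine_fn by (rule sym)
qed

lemma abs_sq_dist_diff_le:
  fixes x y C :: "'a::metric_space"
  shows "\<bar>(dist x C)\<^sup>2 - (dist y C)\<^sup>2\<bar> \<le> dist x y * (2 * dist y C + dist x y)"
proof -
  have d: "\<bar>dist x C - dist y C\<bar> \<le> dist x y"
    by (metis dist_triangle dist_commute abs_le_iff diff_le_eq add.commute minus_diff_eq)
  have "\<bar>(dist x C)\<^sup>2 - (dist y C)\<^sup>2\<bar> = \<bar>dist x C - dist y C\<bar> * (dist x C + dist y C)"
    by (simp add: power2_eq_square square_diff_square_factored abs_mult)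
  also have "\<dots> \<le> dist x y * (2 * dist y C + dist x y)"
    using d by (intro mult_mono) auto
  finally show ?thesis .
qed

lemma good_altitude_ge:
  fixes \<sigma> :: "'a::euclidean_space set"
  assumes "good \<Gamma> \<sigma>" "finite \<sigma>" "2 \<le> card \<sigma>" "v \<in> \<sigma>"
  shows "\<Gamma> ^ (card \<sigma> - 1) * (real (card \<sigma> - 1) * longest_edge \<sigma>) \<le> altitude v \<sigma>"
proof -
  define d where "d = real (card \<sigma> - 1) * longest_edge \<sigma>"
  have "0 \<le> d" unfolding d_def using dist_le_longest_edge[of \<sigma> v v] assms(2,4) by simp
  have "\<Gamma> ^ (card \<sigma> - 1) \<le> thickness \<sigma>" using assms(1,4) unfolding good_def by blast
  also have "thickness \<sigma> = Min ((\<lambda>p. altitude p \<sigma>) ` \<sigma>) / d"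
    using assms(3) unfolding thickness_def d_def by simp
  moreover have "0 \<le> Min ((\<lambda>p. altitude p \<sigma>) ` \<sigma>)"
    using assms(2,4) altitude_nonneg by (subst Min_ge_iff) auto
  ultimately have "\<Gamma> ^ (card \<sigma> - 1) * d \<le> Min ((\<lambda>p. altitude p \<sigma>) ` \<sigma>)"
    using \<open>0 \<le> d\<close> by (cases "d = 0") (auto simp: pos_le_divide_eq)
  also have "\<dots> \<le> altitude v \<sigma>" using assms(2,4) by simp
  finally show ?thesis unfolding d_def .
qed

lemma flake_altitude_lt:
  fixes \<sigma> :: "'a::euclidean_space set"
  assumes fl: "flake \<Gamma> \<sigma>" and card: "2 \<le> card \<sigma>"
  obtains q where "q \<in> \<sigma>"
    "altitude q \<sigma> < \<Gamma> ^ (card \<sigma> - 1) * (real (card \<sigma> - 1) * longest_edge \<sigma>)"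
proof -
  have fin: "finite \<sigma>" using fl unfolding flake_def is_simplex_def by blast
  obtain \<tau> where \<tau>: "\<tau> \<subseteq> \<sigma>" "\<tau> \<noteq> {}" "\<not> \<Gamma> ^ (card \<tau> - 1) \<le> thickness \<tau>"
    using fl unfolding flake_def good_def by blast
  \<comment> \<open>The proper faces of a flake are good, so the bad face is the flake itself.\<close>
  then have "\<tau> = \<sigma>" using fl unfolding flake_def good_def by blast
  obtain a b where "a \<in> \<sigma>" "b \<in> \<sigma>" "a \<noteq> b"
    using card fin by (metis card_le_Suc0_iff_eq not_less_eq_eq numeral_2_eq_2)
  then have "0 < longest_edge \<sigma>"
    using dist_le_longest_edge[OF fin, of a b] by (metis zero_less_dist_iff order_less_le_trans)
  define d where "d = real (card \<sigma> - 1) * longest_edge \<sigma>"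
  have "0 < d" unfolding d_def using card \<open>0 < longest_edge \<sigma>\<close> by simp
  have "Min ((\<lambda>p. altitude p \<sigma>) ` \<sigma>) \<in> (\<lambda>p. altitude p \<sigma>) ` \<sigma>"
    using fin \<open>a \<in> \<sigma>\<close> by (intro Min_in) auto
  then obtain q where q: "q \<in> \<sigma>" "altitude q \<sigma> = Min ((\<lambda>p. altitude p \<sigma>) ` \<sigma>)"
    by (metis imageE)
  then have "altitude q \<sigma> / d < \<Gamma> ^ (card \<sigma> - 1)"
    using \<tau> \<open>\<tau> = \<sigma>\<close> card unfolding thickness_def d_def by simp
  then have "altitude q \<sigma> < \<Gamma> ^ (card \<sigma> - 1) * d"
    using \<open>0 < d\<close> by (simp add: pos_divide_less_eq)
  then show ?thesis using that q(1) unfolding d_def by blast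
qed

lemma flake_card_ne_2:
  fixes \<sigma> :: "'a::euclidean_space set"
  assumes fl: "flake \<Gamma> \<sigma>" and \<Gamma>: "\<Gamma> \<le> 1"
  shows "card \<sigma> \<noteq> 2"
proof
  assume card: "card \<sigma> = 2"
  then obtain a b where \<sigma>: "\<sigma> = {a, b}" "a \<noteq> b" by (metis card_2_iff)
  have "longest_edge \<sigma> = dist a b"
  proof (rule antisym)
    obtain p q where "p \<in> \<sigma>" "q \<in> \<sigma>" "longest_edge \<sigma> = dist p q"
      using longest_edge_attained[of \<sigma>] \<sigma> by auto
    then show "longest_edge \<sigma> \<le> dist a b" using \<sigma> by (auto simp: dist_commute)
    show "dist a b \<le> longest_edge \<sigma>" using dist_le_longest_edge[of \<sigma> a b] \<sigma> by simp
  qed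
  moreover have "altitude v \<sigma> = dist a b" if "v \<in> \<sigma>" for v
    using that \<sigma> unfolding altitude_def by (auto simp: insert_Diff_if dist_commute)
  moreover obtain q where "q \<in> \<sigma>"
    "altitude q \<sigma> < \<Gamma> ^ (card \<sigma> - 1) * (real (card \<sigma> - 1) * longest_edge \<sigma>)"
    using flake_altitude_lt[OF fl] card by auto
  ultimately have "dist a b < \<Gamma> * dist a b" using card by simp
  moreover have "\<Gamma> * dist a b \<le> dist a b" using mult_right_mono[OF \<Gamma> zero_le_dist] by simp
  ultimately show False by simp
qed

lemma separated_perturbation:
  assumes "separated s P" "is_perturbation r P \<zeta> P'"
  shows "separated (s - 2 * r) P'"
  unfolding separated_def
proof (intro ballI impI)
  fix x y assume "x \<in> P'" "y \<in> P'" "x \<noteq> y"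
  then obtain a b where ab: "a \<in> P" "b \<in> P" "x = \<zeta> a" "y = \<zeta> b" "a \<noteq> b"
    using assms(2) unfolding is_perturbation_def bij_betw_def by auto
  then have "s \<le> dist a b" using assms(1) unfolding separated_def by blast
  moreover have "dist a b \<le> dist a x + dist x y + dist y b"
    using dist_triangle[of a b x] dist_triangle[of x b y] by linarith
  moreover have "dist a x \<le> r" "dist y b \<le> r"
    using assms(2) ab unfolding is_perturbation_def by (auto simp: dist_norm norm_minus_commute)
  ultimately show "s - 2 * r \<le> dist x y" by linarith
qed

text \<open>In the notation of the theorem, M is \<mu>'\<epsilon>' and \<eta> is \<delta>0 \<mu>'\<epsilon>'.\<close>

locale forbidden_flake =
  fixes \<tau> :: "'a::euclidean_space set" and k :: nat and p C :: 'a
    and R M \<eta> \<Gamma> \<epsilon> \<mu> :: real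
  assumes flake: "flake \<Gamma> \<tau>" and card: "card \<tau> = k + 2"
    and p: "p \<in> \<tau>" and circ_ball: "circ_ball (\<tau> - {p}) C R"
    and p_near_sphere: "\<bar>dist C p - R\<bar> \<le> \<eta>"
    and separated: "separated M \<tau>"
    and \<epsilon>: "0 < \<epsilon>" and \<mu>: "0 < \<mu>" "\<mu> \<le> 1"
    and \<Gamma>: "0 < \<Gamma>" "\<Gamma> \<le> 2 * \<mu>\<^sup>2 / 75"
    and M: "\<mu> * \<epsilon> / 2 \<le> M" and R: "R \<le> 5 * \<epsilon> / 4"
    and \<eta>: "0 \<le> \<eta>" "\<eta> \<le> \<Gamma> ^ (k + 1) * M"
begin

abbreviation L :: real where "L \<equiv> 2 * R + 2 * \<eta>"

lemma finite_\<tau>: "finite \<tau>"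
  using flake unfolding flake_def is_simplex_def by blast

lemma \<Gamma>_le: "\<Gamma> \<le> 2 * \<mu> / 75" "\<Gamma> \<le> 1"
proof -
  have "\<mu>\<^sup>2 \<le> \<mu>" using \<mu> by (simp add: power2_eq_square mult_left_le_one_le)
  then show "\<Gamma> \<le> 2 * \<mu> / 75" using \<Gamma> by linarith
  then show "\<Gamma> \<le> 1" using \<mu> by linarith
qed

lemma k_pos: "1 \<le> k"
  using flake_card_ne_2[OF flake \<Gamma>_le(2)] card by simp

lemma card_facet: "q \<in> \<tau> \<Longrightarrow> card (\<tau> - {q}) = k + 1"
  using card finite_\<tau> by simp

lemma facet_two_points:
  assumes "q \<in> \<tau>"
  obtains a b where "a \<in> \<tau> - {q}" "b \<in> \<tau> - {q}" "a \<noteq> b"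
proof -
  have "\<not> card (\<tau> - {q}) \<le> Suc 0" using card_facet[OF assms] k_pos by simp
  then show ?thesis using that card_le_Suc0_iff_eq[of "\<tau> - {q}"] finite_\<tau> by blast
qed

lemma M_pos: "0 < M"
  using M mult_pos_pos[OF \<mu>(1) \<epsilon>] by linarith

lemma dist_C_facet: "v \<in> \<tau> - {p} \<Longrightarrow> dist C v = R"
  using circ_ball by (simp add: circ_ball_iff)

lemma R_pos: "0 < R"
  using circ_ball by (simp add: circ_ball_iff)

lemma dist_C_le: "v \<in> \<tau> \<Longrightarrow> dist C v \<le> R + \<eta>"
  using dist_C_facet[of v] p_near_sphere \<eta> by (cases "v = p") auto

lemma dist_le_L: "a \<in> \<tau> \<Longrightarrow> b \<in> \<tau> \<Longrightarrow> dist a b \<le> L"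
  using dist_triangle[of a b C] dist_C_le[of a] dist_C_le[of b] by (simp add: dist_commute)

lemma M_le_dist: "a \<in> \<tau> \<Longrightarrow> b \<in> \<tau> \<Longrightarrow> a \<noteq> b \<Longrightarrow> M \<le> dist a b"
  using separated unfolding separated_def by blast

lemma M_le_2R: "M \<le> 2 * R"
proof -
  obtain a b where ab: "a \<in> \<tau> - {p}" "b \<in> \<tau> - {p}" "a \<noteq> b" using facet_two_points[OF p] .
  then have "M \<le> dist a b" using M_le_dist by blast
  also have "\<dots> \<le> dist C a + dist C b" by (metis dist_triangle dist_commute)
  finally show ?thesis using dist_C_facet ab by simp
qed

lemma power_C_le: "v \<in> \<tau> \<Longrightarrow> \<bar>(dist C v)\<^sup>2 - R\<^sup>2\<bar> \<le> \<eta> * (2 * R + \<eta>)"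
proof (cases "v = p")
  case True
  have "\<bar>(dist C p)\<^sup>2 - R\<^sup>2\<bar> = \<bar>dist C p - R\<bar> * (dist C p + R)"
    using R_pos by (simp add: power2_eq_square square_diff_square_factored abs_mult)
  also have "\<dots> \<le> \<eta> * (2 * R + \<eta>)"
    using p_near_sphere R_pos \<eta> by (intro mult_mono) auto
  finally show ?thesis using True by simp
qed (use dist_C_facet \<eta> R_pos in auto)

lemma \<eta>_le: "\<eta> \<le> \<Gamma> * M" "\<eta> \<le> \<epsilon> / 15"
proof -
  have "\<Gamma> ^ (k + 1) * M \<le> \<Gamma> ^ 1 * M"
    using \<Gamma> \<Gamma>_le M_pos by (intro mult_right_mono power_decreasing) auto
  then show "\<eta> \<le> \<Gamma> * M" using \<eta> by simp
  moreover have "\<Gamma> * M \<le> (2 / 75) * (5 * \<epsilon> / 2)"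
    using \<Gamma> \<Gamma>_le \<mu> M_le_2R R M_pos by (intro mult_mono) auto
  ultimately show "\<eta> \<le> \<epsilon> / 15" by linarith
qed

lemma L_le: "L \<le> 3 * \<epsilon>"
  using R \<eta>_le \<epsilon> by linarith

lemma M_minus_\<Gamma>L: "\<mu> * \<epsilon> / 3 \<le> M - 2 * \<Gamma> * L"
proof -
  have "\<Gamma> * L \<le> (2 * \<mu> / 75) * (3 * \<epsilon>)"
    using \<Gamma> \<Gamma>_le L_le R_pos \<eta> by (intro mult_mono) auto
  then have "2 * \<Gamma> * L \<le> 4 / 25 * (\<mu> * \<epsilon>)" by (simp add: algebra_simps)
  moreover have "0 < \<mu> * \<epsilon>" using \<mu> \<epsilon> by simp
  ultimately show ?thesis using M by linarith
qed

lemma facet_altitude_ge: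
  assumes "q \<in> \<tau>" "v \<in> \<tau> - {q}"
  shows "\<Gamma> ^ k * real k * M \<le> altitude v (\<tau> - {q})"
proof -
  have "\<tau> - {q} \<subset> \<tau>" "\<tau> - {q} \<noteq> {}" using assms by auto
  then have "good \<Gamma> (\<tau> - {q})" using flake unfolding flake_def by blast
  then have "\<Gamma> ^ (card (\<tau> - {q}) - 1) * (real (card (\<tau> - {q}) - 1) * longest_edge (\<tau> - {q}))
      \<le> altitude v (\<tau> - {q})"
    using finite_\<tau> assms card_facet k_pos by (intro good_altitude_ge) auto
  then have "\<Gamma> ^ k * (real k * longest_edge (\<tau> - {q})) \<le> altitude v (\<tau> - {q})"
    unfolding card_facet[OF assms(1)] by simp
  moreover obtain a b where "a \<in> \<tau> - {q}" "b \<in> \<tau> - {q}" "a \<noteq> b"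
    using facet_two_points[OF assms(1)] .
  then have "M \<le> longest_edge (\<tau> - {q})"
    using M_le_dist[of a b] dist_le_longest_edge[of "\<tau> - {q}" a b] finite_\<tau> by auto
  then have "\<Gamma> ^ k * real k * M \<le> \<Gamma> ^ k * real k * longest_edge (\<tau> - {q})"
    using \<Gamma> by (intro mult_left_mono) auto
  ultimately show ?thesis by (simp add: mult.assoc)
qed

lemma \<eta>_le_facet_altitude:
  assumes "q \<in> \<tau>" "v \<in> \<tau> - {q}"
  shows "\<eta> \<le> \<Gamma> * altitude v (\<tau> - {q})"
proof -
  have "\<Gamma> ^ k * M \<le> \<Gamma> ^ k * real k * M" using k_pos \<Gamma> M_pos by simp
  also have "\<dots> \<le> altitude v (\<tau> - {q})" using facet_altitude_ge[OF assms] .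
  finally have "\<Gamma> * (\<Gamma> ^ k * M) \<le> \<Gamma> * altitude v (\<tau> - {q})"
    using \<Gamma> by (intro mult_left_mono) auto
  then show ?thesis using \<eta> by (simp add: mult.assoc)
qed

lemma altitude_mul_le:
  assumes q: "q \<in> \<tau>"
  shows "altitude q \<tau> * (M - 2 * \<Gamma> * L) \<le> 2 * \<Gamma> * L\<^sup>2"
proof -
  define X where "X = \<Gamma> ^ k * real k"
  have X: "0 < X" unfolding X_def using \<Gamma> k_pos by simp
  have L_nonneg: "0 \<le> L" using R_pos \<eta> by simp
  obtain a b where "a \<in> \<tau>" "b \<in> \<tau>" "longest_edge \<tau> = dist a b"
    by (rule longest_edge_attained[OF finite_\<tau>]) (use p in auto)
  then have le_L: "longest_edge \<tau> \<le> L" using dist_le_L by simp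
  obtain q0 where q0: "q0 \<in> \<tau>"
    and q0_alt: "altitude q0 \<tau> < \<Gamma> ^ (card \<tau> - 1) * (real (card \<tau> - 1) * longest_edge \<tau>)"
    by (rule flake_altitude_lt[OF flake]) (use card in simp_all)
  have "real (card \<tau> - 1) * longest_edge \<tau> \<le> (2 * real k) * L"
    using card k_pos le_L dist_le_longest_edge[OF finite_\<tau> p p] by (intro mult_mono) auto
  then have "\<Gamma> ^ (card \<tau> - 1) * (real (card \<tau> - 1) * longest_edge \<tau>)
      \<le> \<Gamma> ^ (card \<tau> - 1) * (2 * real k * L)"
    using \<Gamma> by (intro mult_left_mono) auto
  also have "\<dots> = 2 * \<Gamma> * X * L" using card unfolding X_def by (simp add: algebra_simps)
  finally have D0: "altitude q0 \<tau> \<le> 2 * \<Gamma> * X * L" using q0_alt by simp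
  \<comment> \<open>The facet altitudes are at least X M, so by altitude_transfer the thinness at q0
    propagates to every vertex.\<close>
  have XM: "X * M \<le> L"
  proof -
    obtain a b where ab: "a \<in> \<tau> - {p}" "b \<in> \<tau> - {p}" "a \<noteq> b" using facet_two_points[OF p] .
    have "X * M \<le> altitude a (\<tau> - {p})" using facet_altitude_ge[OF p ab(1)] unfolding X_def .
    also have "\<dots> \<le> dist a b" using altitude_le_dist[of b "\<tau> - {p}" a] ab by simp
    also have "\<dots> \<le> L" using dist_le_L ab by simp
    finally show ?thesis .
  qed
  have "altitude q \<tau> * (X * (M - 2 * \<Gamma> * L)) \<le> altitude q0 \<tau> * L"
  proof (cases "q = q0")
    case True
    have "0 \<le> X * (2 * \<Gamma> * L)" using X \<Gamma> L_nonneg by simp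
    then have "X * (M - 2 * \<Gamma> * L) \<le> L" using XM by (simp add: right_diff_distrib)
    then show ?thesis unfolding True using altitude_nonneg by (intro mult_left_mono)
  next
    case False
    have "X * M \<le> altitude q0 (\<tau> - {q})"
      using facet_altitude_ge[OF q, of q0] q0 False unfolding X_def by simp
    then have "X * (M - 2 * \<Gamma> * L) \<le> altitude q0 (\<tau> - {q}) - altitude q0 \<tau>"
      using D0 by (simp add: algebra_simps)
    then have "altitude q \<tau> * (X * (M - 2 * \<Gamma> * L))
        \<le> altitude q \<tau> * (altitude q0 (\<tau> - {q}) - altitude q0 \<tau>)"
      using altitude_nonneg by (intro mult_left_mono) auto
    also have "\<dots> \<le> altitude q0 \<tau> * longest_edge \<tau>"
      using altitude_transfer[OF finite_\<tau> q0 q False] .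
    also have "\<dots> \<le> altitude q0 \<tau> * L"
      using le_L altitude_nonneg by (intro mult_left_mono) auto
    finally show ?thesis .
  qed
  also have "\<dots> \<le> 2 * \<Gamma> * X * L * L" using D0 L_nonneg by (intro mult_right_mono) auto
  finally have "altitude q \<tau> * (M - 2 * \<Gamma> * L) * X \<le> 2 * \<Gamma> * L\<^sup>2 * X"
    by (simp add: power2_eq_square algebra_simps)
  then show ?thesis using X by (rule mult_right_le_imp_le)
qed

lemma altitude_le:
  assumes "q \<in> \<tau>"
  shows "altitude q \<tau> \<le> 54 * \<Gamma> * \<epsilon> / \<mu>"
proof -
  have L_sq: "L\<^sup>2 \<le> (3 * \<epsilon>)\<^sup>2" using L_le R_pos \<eta> by (intro power_mono) auto
  have "altitude q \<tau> * (\<mu> * \<epsilon> / 3) \<le> altitude q \<tau> * (M - 2 * \<Gamma> * L)"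
    using M_minus_\<Gamma>L altitude_nonneg by (intro mult_left_mono) auto
  also have "\<dots> \<le> 2 * \<Gamma> * L\<^sup>2" using altitude_mul_le[OF assms] .
  also have "\<dots> \<le> 2 * \<Gamma> * (3 * \<epsilon>)\<^sup>2" using L_sq \<Gamma> by (intro mult_left_mono) auto
  also have "\<dots> = 54 * \<Gamma> * \<epsilon> / \<mu> * (\<mu> * \<epsilon> / 3)"
    using \<mu> by (simp add: field_simps power2_eq_square)
  finally have "altitude q \<tau> * (\<mu> * \<epsilon> / 3) \<le> 54 * \<Gamma> * \<epsilon> / \<mu> * (\<mu> * \<epsilon> / 3)" .
  then show ?thesis by (rule mult_right_le_imp_le) (use \<mu> \<epsilon> in simp)
qed

lemma facet_circ_ball:
  assumes q: "q \<in> \<tau>"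
  obtains c r where "circ_ball (\<tau> - {q}) c r" "r \<le> R + \<Gamma> * (2 * R + \<eta>) / 2"
proof (cases "q = p")
  case True
  then show ?thesis using that circ_ball \<Gamma> R_pos \<eta> by simp
next
  case False
  define W where "W = altitude p (\<tau> - {q})"
  have p': "p \<in> \<tau> - {q}" using p False by simp
  have "\<eta> \<le> \<Gamma> * W" unfolding W_def using \<eta>_le_facet_altitude[OF q p'] .
  have "0 < \<Gamma> ^ k * real k * M" using \<Gamma> k_pos M_pos by simp
  then have W: "0 < W" using facet_altitude_ge[OF q p'] unfolding W_def by linarith
  have "dist C v = R" if "v \<in> \<tau> - {q} - {p}" for v using dist_C_facet that by blast
  then obtain c r where cr: "circ_ball (\<tau> - {q}) c r" "r \<le> R + \<bar>(dist C p)\<^sup>2 - R\<^sup>2\<bar> / (2 * W)"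
    unfolding W_def by (rule circ_ball_extend[OF p' _ W[unfolded W_def]])
  have "\<eta> * (2 * R + \<eta>) \<le> (\<Gamma> * W) * (2 * R + \<eta>)"
    using \<open>\<eta> \<le> \<Gamma> * W\<close> R_pos \<eta> by (intro mult_right_mono) auto
  then have "\<bar>(dist C p)\<^sup>2 - R\<^sup>2\<bar> \<le> (\<Gamma> * W) * (2 * R + \<eta>)"
    using power_C_le[OF p] by linarith
  then have "\<bar>(dist C p)\<^sup>2 - R\<^sup>2\<bar> / (2 * W) \<le> \<Gamma> * (2 * R + \<eta>) / 2"
    using W by (simp add: divide_le_eq field_simps)
  then show ?thesis using that cr by simp
qed

lemma facet_smallest_circ_ball:
  assumes "q \<in> \<tau>"
  shows "smallest_circ_ball (\<tau> - {q}) (circumcentre (\<tau> - {q})) (circumradius (\<tau> - {q}))"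
proof -
  obtain a b where "a \<in> \<tau> - {q}" "b \<in> \<tau> - {q}" "a \<noteq> b" using facet_two_points[OF assms] .
  moreover obtain c r where "circ_ball (\<tau> - {q}) c r" using facet_circ_ball[OF assms] by blast
  then have "circ_finite (\<tau> - {q})" unfolding circ_finite_def by blast
  ultimately show ?thesis by (intro smallest_circ_ball_circumcentre)
qed

lemma facet_circumradius_bounds:
  assumes "q \<in> \<tau>"
  shows "M / 2 \<le> circumradius (\<tau> - {q})" "circumradius (\<tau> - {q}) < 2 * \<epsilon>"
proof -
  note sm = facet_smallest_circ_ball[OF assms]
  obtain a b where ab: "a \<in> \<tau> - {q}" "b \<in> \<tau> - {q}" "a \<noteq> b" using facet_two_points[OF assms] .
  have "M \<le> dist a b" using M_le_dist ab by simp
  also have "\<dots> \<le> dist (circumcentre (\<tau> - {q})) a + dist (circumcentre (\<tau> - {q})) b"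
    by (metis dist_triangle dist_commute)
  also have "\<dots> = 2 * circumradius (\<tau> - {q})"
    using sm ab unfolding smallest_circ_ball_def circ_ball_iff by simp
  finally show "M / 2 \<le> circumradius (\<tau> - {q})" by simp
  obtain c r where cr: "circ_ball (\<tau> - {q}) c r" "r \<le> R + \<Gamma> * (2 * R + \<eta>) / 2"
    using facet_circ_ball[OF assms] .
  have "circumradius (\<tau> - {q}) \<le> r"
    using sm cr(1) unfolding smallest_circ_ball_def by blast
  moreover have "\<Gamma> * (2 * R + \<eta>) \<le> (2 / 75) * (3 * \<epsilon>)"
    using \<Gamma> \<Gamma>_le \<mu> L_le \<eta> R_pos by (intro mult_mono) auto
  ultimately show "circumradius (\<tau> - {q}) < 2 * \<epsilon>" using cr(2) R \<epsilon> by linarith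
qed

lemma weighted_power_C_le:
  assumes q: "q \<in> \<tau>" and u: "sum u (\<tau> - {q}) = 1"
  defines "y \<equiv> \<Sum>v\<in>\<tau> - {q}. u v *\<^sub>R v"
  shows "\<bar>\<Sum>v\<in>\<tau> - {q}. u v * ((dist v C)\<^sup>2 - R\<^sup>2)\<bar> \<le> \<Gamma> * (dist y q + 2 * L) * (2 * R + \<eta>)"
proof -
  \<comment> \<open>Only the vertex p can contribute, since the others lie on the sphere around C.\<close>
  have "(\<Sum>v\<in>\<tau> - {q}. u v * ((dist v C)\<^sup>2 - R\<^sup>2)) = (\<Sum>v\<in>(\<tau> - {q}) \<inter> {p}. u v * ((dist v C)\<^sup>2 - R\<^sup>2))"
    using finite_\<tau> dist_C_facet by (intro sum.mono_neutral_right) (auto simp: dist_commute)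
  moreover have "0 \<le> \<Gamma> * (dist y q + 2 * L) * (2 * R + \<eta>)"
    using \<Gamma> R_pos \<eta> by simp
  moreover have "\<bar>u p * ((dist p C)\<^sup>2 - R\<^sup>2)\<bar> \<le> \<Gamma> * (dist y q + 2 * L) * (2 * R + \<eta>)"
    if p': "p \<in> \<tau> - {q}"
  proof -
    define W where "W = altitude p (\<tau> - {q})"
    have "\<bar>(dist p C)\<^sup>2 - R\<^sup>2\<bar> \<le> \<eta> * (2 * R + \<eta>)"
      using power_C_le[OF p] by (simp add: dist_commute)
    also have "\<dots> \<le> (\<Gamma> * W) * (2 * R + \<eta>)"
      using \<eta>_le_facet_altitude[OF q p'] R_pos \<eta> unfolding W_def by (intro mult_right_mono) auto
    finally have pow_p: "\<bar>(dist p C)\<^sup>2 - R\<^sup>2\<bar> \<le> \<Gamma> * W * (2 * R + \<eta>)" .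
    obtain a b where "a \<in> \<tau> - {q}" "b \<in> \<tau> - {q}" "a \<noteq> b" using facet_two_points[OF q] .
    then obtain w where w: "w \<in> \<tau> - {q}" "w \<noteq> p" by blast
    have "\<bar>u p\<bar> * W \<le> dist y p + W"
      using affine_weight_mul_altitude_le[of "\<tau> - {q}" p u] finite_\<tau> p' u unfolding y_def W_def by simp
    also have "\<dots> \<le> (dist y q + L) + L"
    proof -
      have "dist y p \<le> dist y q + dist q p" by (rule dist_triangle)
      moreover have "dist q p \<le> L" using dist_le_L q p by simp
      moreover have "W \<le> dist p w" unfolding W_def using w by (intro altitude_le_dist) auto
      moreover have "dist p w \<le> L" using dist_le_L p w by simp
      ultimately show ?thesis by linarith
    qed
    finally have uW: "\<bar>u p\<bar> * W \<le> dist y q + 2 * L" by simp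
    have "\<bar>u p * ((dist p C)\<^sup>2 - R\<^sup>2)\<bar> \<le> \<bar>u p\<bar> * (\<Gamma> * W * (2 * R + \<eta>))"
      unfolding abs_mult using pow_p by (intro mult_left_mono) auto
    also have "\<dots> = \<Gamma> * (\<bar>u p\<bar> * W) * (2 * R + \<eta>)" by (simp add: ac_simps)
    also have "\<dots> \<le> \<Gamma> * (dist y q + 2 * L) * (2 * R + \<eta>)"
      using uW \<Gamma> R_pos \<eta> by (intro mult_right_mono mult_left_mono) auto
    finally show ?thesis .
  qed
  ultimately show ?thesis by (cases "p \<in> \<tau> - {q}") (auto simp: Int_absorb1)
qed

lemma power_projection_le:
  assumes q: "q \<in> \<tau>"
  defines "x \<equiv> closest_point (affine hull (\<tau> - {q})) q"
  shows "\<bar>(dist x (circumcentre (\<tau> - {q})))\<^sup>2 - (circumradius (\<tau> - {q}))\<^sup>2\<bar>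
    \<le> altitude q \<tau> * (L + altitude q \<tau>) + \<Gamma> * (altitude q \<tau> + 3 * L) * (2 * R + \<eta>)"
proof -
  define c where "c = circumcentre (\<tau> - {q})"
  define r where "r = circumradius (\<tau> - {q})"
  define D where "D = altitude q \<tau>"
  have "\<tau> - {q} \<noteq> {}" using facet_two_points[OF q] by blast
  have "x \<in> affine hull (\<tau> - {q})" and xq: "dist x q = D"
    using closest_point_affine_hull[OF \<open>\<tau> - {q} \<noteq> {}\<close>, of q]
    unfolding x_def D_def altitude_def by (auto simp: dist_commute)
  then obtain u where u: "sum u (\<tau> - {q}) = 1" "(\<Sum>v\<in>\<tau> - {q}. u v *\<^sub>R v) = x"
    using finite_\<tau> by (auto simp: affine_hull_finite)
  have "dist v c = r" if "v \<in> \<tau> - {q}" for v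
    using facet_smallest_circ_ball[OF q] that
    unfolding c_def r_def smallest_circ_ball_def circ_ball_iff by (simp add: dist_commute)
  then have "(dist x c)\<^sup>2 - r\<^sup>2 - ((dist x C)\<^sup>2 - R\<^sup>2)
      = - (\<Sum>v\<in>\<tau> - {q}. u v * ((dist v C)\<^sup>2 - R\<^sup>2))"
    using power_difference_affine_combination[OF _ u(1), of c r C R] finite_\<tau> u(2)
    by (simp add: sum_negf[symmetric] algebra_simps)
  then have "\<bar>(dist x c)\<^sup>2 - r\<^sup>2\<bar>
      \<le> \<bar>(dist x C)\<^sup>2 - (dist q C)\<^sup>2\<bar> + \<bar>(dist q C)\<^sup>2 - R\<^sup>2\<bar>
        + \<bar>\<Sum>v\<in>\<tau> - {q}. u v * ((dist v C)\<^sup>2 - R\<^sup>2)\<bar>"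
    by linarith
  also have "\<bar>(dist x C)\<^sup>2 - (dist q C)\<^sup>2\<bar> \<le> D * (L + D)"
  proof -
    have "\<bar>(dist x C)\<^sup>2 - (dist q C)\<^sup>2\<bar> \<le> D * (2 * dist q C + D)"
      using abs_sq_dist_diff_le[of x C q] xq by simp
    also have "\<dots> \<le> D * (L + D)"
      using dist_C_le[OF q] altitude_nonneg unfolding D_def by (intro mult_left_mono) (auto simp: dist_commute)
    finally show ?thesis .
  qed
  also have "\<bar>(dist q C)\<^sup>2 - R\<^sup>2\<bar> \<le> \<Gamma> * L * (2 * R + \<eta>)"
  proof -
    have "\<eta> \<le> \<Gamma> * L" using \<eta>_le(1) M_le_2R \<Gamma> \<eta> by (smt (verit) mult_left_mono)
    then have "\<eta> * (2 * R + \<eta>) \<le> \<Gamma> * L * (2 * R + \<eta>)" using R_pos \<eta> by (intro mult_right_mono) auto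
    then show ?thesis using power_C_le[OF q] by (simp add: dist_commute)
  qed
  also have "\<bar>\<Sum>v\<in>\<tau> - {q}. u v * ((dist v C)\<^sup>2 - R\<^sup>2)\<bar> \<le> \<Gamma> * (D + 2 * L) * (2 * R + \<eta>)"
    using weighted_power_C_le[OF q u(1)] u(2) xq by simp
  finally show ?thesis unfolding c_def r_def D_def by (simp add: algebra_simps)
qed

lemma hoop_bound_arithmetic:
  assumes D: "0 \<le> D" "D \<le> 54 * \<Gamma> * \<epsilon> / \<mu>"
    and F: "F \<le> D * (L + D) + \<Gamma> * (D + 3 * L) * (2 * R + \<eta>)"
    and r: "M / 2 \<le> r"
  shows "D + F / r \<le> 2 * (16 / \<mu>) ^ 3 * \<Gamma> * r"
proof -
  have "54 * \<Gamma> * \<epsilon> / \<mu> \<le> 54 * (2 * \<mu> / 75) * \<epsilon> / \<mu>"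
    using \<Gamma>_le \<mu> \<epsilon> by (intro divide_right_mono) auto
  also have "\<dots> = 36 / 25 * \<epsilon>" using \<mu> by simp
  finally have D_le: "D \<le> 3 / 2 * \<epsilon>" using D by linarith
  have "D * (L + D) \<le> D * (5 * \<epsilon>)" using D D_le L_le by (intro mult_left_mono) auto
  also have "\<dots> \<le> 54 * \<Gamma> * \<epsilon> / \<mu> * (5 * \<epsilon>)" using D \<epsilon> by (intro mult_right_mono) auto
  also have "\<dots> = 270 * \<Gamma> * \<epsilon>\<^sup>2 / \<mu>" by (simp add: power2_eq_square)
  finally have F1: "D * (L + D) \<le> 270 * \<Gamma> * \<epsilon>\<^sup>2 / \<mu>" .
  have "(D + 3 * L) * (2 * R + \<eta>) \<le> (11 * \<epsilon>) * (3 * \<epsilon>)"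
    using D D_le L_le R_pos \<eta> \<epsilon> by (intro mult_mono) auto
  then have "\<Gamma> * (D + 3 * L) * (2 * R + \<eta>) \<le> \<Gamma> * ((11 * \<epsilon>) * (3 * \<epsilon>))"
    using \<Gamma> by (simp add: mult.assoc mult_left_mono)
  also have "\<dots> \<le> 33 * \<Gamma> * \<epsilon>\<^sup>2 / \<mu>"
    using \<Gamma> \<mu> \<epsilon> by (simp add: power2_eq_square le_divide_eq mult_left_le_one_le)
  finally have "F \<le> 270 * \<Gamma> * \<epsilon>\<^sup>2 / \<mu> + 33 * \<Gamma> * \<epsilon>\<^sup>2 / \<mu>" using F F1 by linarith
  then have F_le: "F \<le> 303 * \<Gamma> * \<epsilon>\<^sup>2 / \<mu>" by (simp add: add_divide_distrib[symmetric])
  have r_ge: "\<mu> * \<epsilon> / 4 \<le> r" using M r by linarith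
  have r_pos: "0 < r" using r_ge \<mu> \<epsilon> by (metis divide_pos_pos mult_pos_pos order_less_le_trans zero_less_numeral)
  have "F / r \<le> (303 * \<Gamma> * \<epsilon>\<^sup>2 / \<mu>) / r" using F_le r_pos by (intro divide_right_mono) auto
  also have "\<dots> \<le> (303 * \<Gamma> * \<epsilon>\<^sup>2 / \<mu>) / (\<mu> * \<epsilon> / 4)"
    using r_ge r_pos \<Gamma> \<mu> \<epsilon> by (intro divide_left_mono) (auto intro: mult_pos_pos)
  also have "\<dots> = 1212 * \<Gamma> * \<epsilon> / \<mu>\<^sup>2" using \<mu> \<epsilon> by (simp add: field_simps power2_eq_square)
  finally have Fr: "F / r \<le> 1212 * \<Gamma> * \<epsilon> / \<mu>\<^sup>2" .
  have "54 * \<Gamma> * \<epsilon> / \<mu> \<le> 54 * \<Gamma> * \<epsilon> / \<mu>\<^sup>2"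
    using \<mu> \<Gamma> \<epsilon> by (intro divide_left_mono) (auto simp: power2_eq_square mult_left_le_one_le)
  moreover have "54 * \<Gamma> * \<epsilon> / \<mu>\<^sup>2 + 1212 * \<Gamma> * \<epsilon> / \<mu>\<^sup>2 \<le> 2048 * \<Gamma> * \<epsilon> / \<mu>\<^sup>2"
    using \<Gamma> \<epsilon> \<mu> by (simp add: add_divide_distrib[symmetric] divide_right_mono)
  ultimately have "D + F / r \<le> 2048 * \<Gamma> * \<epsilon> / \<mu>\<^sup>2" using D Fr by linarith
  also have "\<dots> = 2 * (16 / \<mu>) ^ 3 * \<Gamma> * (\<mu> * \<epsilon> / 4)"
    using \<mu> by (simp add: field_simps power2_eq_square power3_eq_cube)
  also have "\<dots> \<le> 2 * (16 / \<mu>) ^ 3 * \<Gamma> * r" using r_ge \<mu> \<Gamma> by (intro mult_left_mono) auto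
  finally show ?thesis .
qed

lemma hoop_property_and_circumradius_lt:
  "hoop_property (2 * (16 / \<mu>) ^ 3 * \<Gamma>) \<tau> \<and> (\<forall>q\<in>\<tau>. circumradius (\<tau> - {q}) < 2 * \<epsilon>)"
proof -
  have "infdist q (circumsphere (\<tau> - {q})) \<le> 2 * (16 / \<mu>) ^ 3 * \<Gamma> * circumradius (\<tau> - {q})"
    if q: "q \<in> \<tau>" for q
  proof -
    define c where "c = circumcentre (\<tau> - {q})"
    define r where "r = circumradius (\<tau> - {q})"
    define x where "x = closest_point (affine hull (\<tau> - {q})) q"
    obtain a b where ab: "a \<in> \<tau> - {q}" "b \<in> \<tau> - {q}" "a \<noteq> b" using facet_two_points[OF q] .
    note sm = facet_smallest_circ_ball[OF q, folded c_def r_def]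
    have "x \<in> affine hull (\<tau> - {q})" and qx: "dist q x = altitude q \<tau>"
      using closest_point_affine_hull[of "\<tau> - {q}" q] ab unfolding x_def altitude_def by auto
    moreover have "c \<in> affine hull (\<tau> - {q})"
      using smallest_circ_ball_centre_in_affine_hull[OF sm ab] .
    moreover have "dist c a = r" "0 < r" using sm ab unfolding smallest_circ_ball_def circ_ball_iff by auto
    ultimately have "infdist x (circumsphere (\<tau> - {q})) \<le> \<bar>(dist x c)\<^sup>2 - r\<^sup>2\<bar> / r"
      unfolding circumsphere_def c_def[symmetric] r_def[symmetric]
      using hull_inc[OF ab(1)] by (intro infdist_sphere_inter_affine_le) auto
    then have "infdist q (circumsphere (\<tau> - {q})) \<le> altitude q \<tau> + \<bar>(dist x c)\<^sup>2 - r\<^sup>2\<bar> / r"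
      using infdist_triangle[of q "circumsphere (\<tau> - {q})" x] qx by linarith
    also have "\<dots> \<le> 2 * (16 / \<mu>) ^ 3 * \<Gamma> * r"
      using altitude_nonneg altitude_le[OF q] power_projection_le[OF q, folded x_def c_def r_def]
        facet_circumradius_bounds(1)[OF q, folded r_def]
      by (intro hoop_bound_arithmetic) auto
    finally show ?thesis unfolding r_def .
  qed
  moreover have "circ_finite (\<tau> - {q})" if "q \<in> \<tau>" for q
    using facet_smallest_circ_ball[OF that] unfolding circ_finite_def smallest_circ_ball_def by blast
  ultimately show ?thesis unfolding hoop_property_def using facet_circumradius_bounds(2) by blast
qed

end

theorem mainTheorem10:
  fixes P P' \<tau> :: "'a::euclidean_space set"
    and \<zeta> :: "'a \<Rightarrow> 'a"
    and \<mu> \<epsilon> \<rho>0 \<Gamma>0 \<delta>0 :: real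
  assumes "is_net \<mu> \<epsilon> P"
    and "0 < \<rho>0" and "\<rho>0 \<le> \<mu> / 4"
    and "is_perturbation (\<rho>0 * \<epsilon>) P \<zeta> P'"
    and "0 < \<Gamma>0" and "\<Gamma>0 \<le> 1" and "0 \<le> \<delta>0"
    and "\<delta>0 \<le> \<Gamma>0 ^ (DIM('a) + 1)"
    and "\<Gamma>0 \<le> 2 * \<mu>\<^sup>2 / 75"
    and "forbidden_config P' ((\<mu> - 2 * \<rho>0) / (1 + \<rho>0)) ((1 + \<rho>0) * \<epsilon>) \<Gamma>0 \<delta>0 \<tau>"
  shows "hoop_property (2 * (16 / \<mu>) ^ 3 * \<Gamma>0) \<tau> \<and>
         (\<forall>p\<in>\<tau>. circumradius (\<tau> - {p}) < 2 * \<epsilon>)"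
proof -
  obtain k p C R where \<tau>: "\<tau> \<subseteq> P'" "k \<le> DIM('a)" "card \<tau> = k + 2" "flake \<Gamma>0 \<tau>"
    and p: "p \<in> \<tau>" "circ_ball (\<tau> - {p}) C R" "R < (1 + \<rho>0) * \<epsilon>"
      "\<bar>norm (p - C) - R\<bar> \<le> \<delta>0 * ((\<mu> - 2 * \<rho>0) / (1 + \<rho>0)) * ((1 + \<rho>0) * \<epsilon>)"
    using assms(10) unfolding forbidden_config_def by blast
  have net: "0 < \<epsilon>" "0 < \<mu>" "\<mu> \<le> 1" "separated (\<mu> * \<epsilon>) P"
    using assms(1) unfolding is_net_def by auto
  define M where "M = (\<mu> - 2 * \<rho>0) * \<epsilon>"
  have "separated M \<tau>"
    using separated_perturbation[OF net(4) assms(4)] \<tau>(1)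
    unfolding separated_def M_def by (auto simp: algebra_simps)
  moreover have "\<bar>dist C p - R\<bar> \<le> \<delta>0 * M"
    using p(4) assms(2) unfolding M_def by (simp add: dist_norm norm_minus_commute)
  moreover have M: "\<mu> * \<epsilon> / 2 \<le> M"
    using assms(3) net unfolding M_def by (auto intro: order_trans[OF _ mult_right_mono])
  moreover have "(1 + \<rho>0) * \<epsilon> \<le> 5 / 4 * \<epsilon>" using assms(3) net by (intro mult_right_mono) auto
  then have "R \<le> 5 * \<epsilon> / 4" using p(3) by linarith
  moreover have "\<Gamma>0 ^ (DIM('a) + 1) \<le> \<Gamma>0 ^ (k + 1)"
    using \<tau>(2) assms(5,6) by (intro power_decreasing) auto
  then have "\<delta>0 * M \<le> \<Gamma>0 ^ (k + 1) * M"
    using assms(8) M mult_pos_pos[OF net(2,1)] by (intro mult_right_mono) auto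
  ultimately interpret forbidden_flake \<tau> k p C R M "\<delta>0 * M" \<Gamma>0 \<epsilon> \<mu>
    using \<tau>(3,4) p(1,2) net assms(5,7,9) by unfold_locales auto
  show ?thesis by (rule hoop_property_and_circumradius_lt)
qed

end
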